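(* Let $K$ be a field, $A=K[x_1,\dots,x_n]$, and $P=(x_1^{e_1},\dots,x_r^{e_r})$ for some $r\le n$ and integers $2\le e_1\le\cdots\le e_r$. Let $J\subset A$ be a strongly stable ideal and $I\subset A$ a monomial ideal containing $P+J$. Fix variables $a=x_i$, $b=x_k$ with $i<k$. Let $I'$ be the ideal of $A$ generated by all minimal monomial generators of $I$ other than $b^{e_b}$ (where $e_b=e_k$ if $k\le r$; if $k>r$, take $I'=I$). Let $T'$ be the $\{a,b\}$-compression of $I'$ and $T=T'+P$. Then $J\subset T$.
   Context: A monomial ideal $J$ is strongly stable if whenever $x_l m\in J$ for a monomial $m$, then $x_p m\in J$ for all $p<l$. For a monomial ideal $I$ and variables $a=x_i$, $b=x_k$ with $i<k$, write $I=\bigoplus_f fV_f$, where $f$ ranges over monomials in the variables other than $a,b$ and each $V_f$ is a monomial ideal of $K[a,b]$. The $\{a,b\}$-compression of $I$ is $\bigoplus_f fN_f$, where $N_f\subset K[a,b]$ is the lex ideal (with respect to $a>b$) having the same Hilbert function as $V_f$. A lex ideal is a monomial ideal whose degree-$d$ monomials form, for every $d$, an initial lexicographic segment of all degree-$d$ monomials. *)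

theory Defs
  imports Main
begin

(* Monomials of A = K[x_0,...,x_{n-1}] are exponent vectors (nat => nat) vanishing
  outside {0..<n}; a monomial ideal is identified with its set of monomials
  (divisibility = pointwise order). Variables are indexed from 0. *)

definition monoms :: "nat \<Rightarrow> (nat \<Rightarrow> nat) set" where
  "monoms n = {m. \<forall>j. n \<le> j \<longrightarrow> m j = 0}"

definition monomial_ideal :: "nat \<Rightarrow> (nat \<Rightarrow> nat) set \<Rightarrow> bool" where
  "monomial_ideal n I \<longleftrightarrow> I \<subseteq> monoms n \<and>
     (\<forall>m\<in>I. \<forall>m'\<in>monoms n. m \<le> m' \<longrightarrow> m' \<in> I)"

definition gen_ideal :: "nat \<Rightarrow> (nat \<Rightarrow> nat) set \<Rightarrow> (nat \<Rightarrow> nat) set" where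
  "gen_ideal n G = {m \<in> monoms n. \<exists>g\<in>G. g \<le> m}"

definition min_gens :: "(nat \<Rightarrow> nat) set \<Rightarrow> (nat \<Rightarrow> nat) set" where
  "min_gens I = {m \<in> I. \<forall>m'\<in>I. m' \<le> m \<longrightarrow> m' = m}"

definition strongly_stable :: "nat \<Rightarrow> (nat \<Rightarrow> nat) set \<Rightarrow> bool" where
  "strongly_stable n J \<longleftrightarrow> monomial_ideal n J \<and>
     (\<forall>m\<in>monoms n. \<forall>l<n. \<forall>p<l. m(l := m l + 1) \<in> J \<longrightarrow> m(p := m p + 1) \<in> J)"

definition var_pow :: "nat \<Rightarrow> nat \<Rightarrow> (nat \<Rightarrow> nat)" where
  "var_pow j c = (\<lambda>t. if t = j then c else 0)"

definition P_ideal :: "nat \<Rightarrow> nat \<Rightarrow> (nat \<Rightarrow> nat) \<Rightarrow> (nat \<Rightarrow> nat) set" where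
  "P_ideal n r e = gen_ideal n {var_pow j (e j) | j. j < r}"

(* Monomials of K[a,b]: a^p b^q is the pair (p,q). *)
definition deg_part2 :: "(nat \<times> nat) set \<Rightarrow> nat \<Rightarrow> (nat \<times> nat) set" where
  "deg_part2 V d = {(p, q) \<in> V. p + q = d}"

definition monomial_ideal2 :: "(nat \<times> nat) set \<Rightarrow> bool" where
  "monomial_ideal2 N \<longleftrightarrow> (\<forall>p q p' q'. (p, q) \<in> N \<and> p \<le> p' \<and> q \<le> q' \<longrightarrow> (p', q') \<in> N)"

(* Lex ideal w.r.t. a > b: in each degree the monomials form an initial lex segment
  (a^d > a^(d-1) b > ... > b^d). *)
definition lex_ideal2 :: "(nat \<times> nat) set \<Rightarrow> bool" where
  "lex_ideal2 N \<longleftrightarrow> monomial_ideal2 N \<and>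
     (\<forall>p q p'. (p, q) \<in> N \<and> p \<le> p' \<and> p' \<le> p + q \<longrightarrow> (p', p + q - p') \<in> N)"

definition lex_of :: "(nat \<times> nat) set \<Rightarrow> (nat \<times> nat) set" where
  "lex_of V = (THE N. lex_ideal2 N \<and> (\<forall>d. card (deg_part2 N d) = card (deg_part2 V d)))"

definition fiber :: "(nat \<Rightarrow> nat) set \<Rightarrow> nat \<Rightarrow> nat \<Rightarrow> (nat \<Rightarrow> nat) \<Rightarrow> (nat \<times> nat) set" where
  "fiber I i k f = {(p, q). f(i := p, k := q) \<in> I}"

definition compression :: "nat \<Rightarrow> nat \<Rightarrow> nat \<Rightarrow> (nat \<Rightarrow> nat) set \<Rightarrow> (nat \<Rightarrow> nat) set" where
  "compression n i k I = {m \<in> monoms n. (m i, m k) \<in> lex_of (fiber I i k (m(i := 0, k := 0)))}"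

end

theory Submission
  imports Defs
begin

text \<open>Let \<open>m \<in> J\<close> avoid \<open>P\<close> and write \<open>m = f a^p b^q\<close>. Strong stability moves \<open>m\<close> to
  \<open>f a^(p+j) b^(q-j) \<in> J \<subseteq> I\<close> for all \<open>j \<le> q\<close>. Their \<open>b\<close>-exponents stay below \<open>e_k\<close>
  (otherwise \<open>m \<in> P\<close>), so none of them is a multiple of \<open>b^(e_k)\<close> and all lie in \<open>I'\<close>.
  Hence the degree \<open>p + q\<close> part of the fibre \<open>V_f\<close> of \<open>I'\<close> has at least \<open>q + 1\<close> elements,
  and the lex ideal with the same Hilbert function, whose degree \<open>d\<close> part consists of the
  \<open>a^(d-t) b^t\<close> with \<open>t\<close> below that count, contains \<open>a^p b^q\<close>.\<close>

lemma deg_part2_subset: "deg_part2 V d \<subseteq> (\<lambda>p. (p, d - p)) ` {0..d}"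
  unfolding deg_part2_def by (force simp: image_iff)

lemma finite_deg_part2: "finite (deg_part2 V d)"
  by (rule finite_subset[OF deg_part2_subset]) auto

lemma card_deg_part2_le: "card (deg_part2 V d) \<le> d + 1"
proof -
  have "card (deg_part2 V d) \<le> card ((\<lambda>p. (p, d - p)) ` {0..d})"
    by (rule card_mono[OF _ deg_part2_subset]) auto
  also have "\<dots> \<le> card {0..d}" by (rule card_image_le) auto
  finally show ?thesis by simp
qed

lemma card_deg_part2_ge_segment:
  assumes "\<And>j. j \<le> q \<Longrightarrow> (p + j, q - j) \<in> V"
  shows "q + 1 \<le> card (deg_part2 V (p + q))"
proof -
  have sub: "(\<lambda>j. (p + j, q - j)) ` {0..q} \<subseteq> deg_part2 V (p + q)"
    using assms unfolding deg_part2_def by auto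
  have "card ((\<lambda>j. (p + j, q - j)) ` {0..q}) = q + 1"
    by (subst card_image) (auto simp: inj_on_def)
  then show ?thesis using card_mono[OF finite_deg_part2 sub] by simp
qed

lemma lex_ideal2_mem_iff:
  assumes "lex_ideal2 N"
  shows "(p, q) \<in> N \<longleftrightarrow> q + 1 \<le> card (deg_part2 N (p + q))"
proof
  assume "(p, q) \<in> N"
  have "(p + j, q - j) \<in> N" if "j \<le> q" for j
  proof -
    have "(p + j, p + q - (p + j)) \<in> N"
      using assms \<open>(p, q) \<in> N\<close> that unfolding lex_ideal2_def by (meson add_le_mono le_add1 order_refl)
    then show ?thesis by simp
  qed
  then show "q + 1 \<le> card (deg_part2 N (p + q))"
    by (rule card_deg_part2_ge_segment)
next
  assume c: "q + 1 \<le> card (deg_part2 N (p + q))"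
  show "(p, q) \<in> N"
  proof (rule ccontr)
    assume notin: "(p, q) \<notin> N"
    have sub: "deg_part2 N (p + q) \<subseteq> (\<lambda>p'. (p', p + q - p')) ` {p + 1..p + q}"
    proof
      fix x assume x: "x \<in> deg_part2 N (p + q)"
      obtain a b where ab: "x = (a, b)" "(a, b) \<in> N" "a + b = p + q"
        using x by (cases x) (auto simp: deg_part2_def)
      have "p < a"
      proof (rule ccontr)
        assume "\<not> p < a"
        then have "(p, a + b - p) \<in> N"
          using assms ab unfolding lex_ideal2_def by (metis le_add1 not_less)
        then show False using notin ab by simp
      qed
      then show "x \<in> (\<lambda>p'. (p', p + q - p')) ` {p + 1..p + q}" using ab by (auto simp: image_iff)
    qed
    have "card (deg_part2 N (p + q)) \<le> card ((\<lambda>p'. (p', p + q - p')) ` {p + 1..p + q})"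
      by (rule card_mono[OF _ sub]) auto
    also have "\<dots> \<le> card {p + 1..p + q}" by (rule card_image_le) auto
    finally show False using c by simp
  qed
qed

text \<open>Macaulay growth in two variables: multiplying by \<open>b\<close> is injective, and the
  \<open>a\<close>-multiple of the element of largest \<open>a\<close>-degree is not among the \<open>b\<close>-multiples.\<close>

lemma card_deg_part2_Suc_ge:
  assumes "monomial_ideal2 V" "deg_part2 V d \<noteq> {}"
  shows "card (deg_part2 V d) + 1 \<le> card (deg_part2 V (Suc d))"
proof -
  let ?S = "deg_part2 V d" and ?mul_b = "\<lambda>(p, q). (p, Suc q)"
  define p1 where "p1 = Max (fst ` ?S)"
  have "p1 \<in> fst ` ?S" unfolding p1_def using assms(2) finite_deg_part2 by (intro Max_in) auto
  then obtain q1 where q1: "(p1, q1) \<in> ?S" by force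
  have p1_max: "fst x \<le> p1" if "x \<in> ?S" for x
    unfolding p1_def using that finite_deg_part2 by (intro Max_ge) auto
  have up: "(p, Suc q) \<in> V" "(Suc p, q) \<in> V" if "(p, q) \<in> V" for p q
    using assms(1) that unfolding monomial_ideal2_def by (meson le_SucI order_refl)+
  have sub: "insert (Suc p1, q1) (?mul_b ` ?S) \<subseteq> deg_part2 V (Suc d)"
    using up q1 unfolding deg_part2_def by auto
  have "(Suc p1, q1) \<notin> ?mul_b ` ?S" using p1_max by force
  moreover have "inj_on ?mul_b ?S" by (auto simp: inj_on_def)
  ultimately have "card (insert (Suc p1, q1) (?mul_b ` ?S)) = card ?S + 1"
    using finite_deg_part2 by (simp add: card_image)
  then show ?thesis using card_mono[OF finite_deg_part2 sub] by simp
qed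

lemma card_deg_part2_add_ge:
  assumes "monomial_ideal2 V" "deg_part2 V d \<noteq> {}"
  shows "card (deg_part2 V d) + s \<le> card (deg_part2 V (d + s))"
proof (induction s)
  case (Suc s)
  have "0 < card (deg_part2 V d)"
    using assms(2) finite_deg_part2 by (simp add: card_gt_0_iff)
  then have "deg_part2 V (d + s) \<noteq> {}"
    using Suc.IH by auto
  then show ?case using Suc card_deg_part2_Suc_ge[OF assms(1)] by fastforce
qed simp

lemma lex_ideal2_exists:
  assumes "monomial_ideal2 V"
  shows "\<exists>N. lex_ideal2 N \<and> (\<forall>d. card (deg_part2 N d) = card (deg_part2 V d))"
proof -
  define c where "c d = card (deg_part2 V d)" for d
  have grow: "c d + s \<le> c (d + s)" if "1 \<le> c d" for d s
  proof -
    have "deg_part2 V d \<noteq> {}" using that by (auto simp: c_def)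
    then show ?thesis using card_deg_part2_add_ge[OF assms] unfolding c_def by blast
  qed
  define N where "N = {(p, q). q + 1 \<le> c (p + q)}"
  have "monomial_ideal2 N"
    unfolding monomial_ideal2_def
  proof (intro allI impI)
    fix p q p' q' assume h: "(p, q) \<in> N \<and> p \<le> p' \<and> q \<le> q'"
    then have q: "q + 1 \<le> c (p + q)" by (simp add: N_def)
    have "c (p + q) + (q' - q) \<le> c (p + q')"
      using grow[of "p + q" "q' - q"] q h by simp
    moreover have "c (p + q') + (p' - p) \<le> c (p' + q')"
      using grow[of "p + q'" "p' - p"] calculation q h by (simp add: add.commute)
    ultimately have "q' + 1 \<le> c (p' + q')" using q h by linarith
    then show "(p', q') \<in> N" by (simp add: N_def)
  qed
  then have "lex_ideal2 N"
    unfolding lex_ideal2_def by (auto simp: N_def)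
  moreover have "card (deg_part2 N d) = c d" for d
  proof -
    have "c d \<le> d + 1" unfolding c_def by (rule card_deg_part2_le)
    then have "deg_part2 N d = (\<lambda>t. (d - t, t)) ` {..<c d}"
      unfolding deg_part2_def N_def by (force simp: image_iff)
    moreover have "inj_on (\<lambda>t. (d - t, t)) {..<c d}" by (auto simp: inj_on_def)
    ultimately show ?thesis by (simp add: card_image)
  qed
  ultimately show ?thesis unfolding c_def by blast
qed

lemma mem_lex_of_iff:
  assumes "monomial_ideal2 V"
  shows "(p, q) \<in> lex_of V \<longleftrightarrow> q + 1 \<le> card (deg_part2 V (p + q))"
proof -
  let ?lex_for_V = "\<lambda>N. lex_ideal2 N \<and> (\<forall>d. card (deg_part2 N d) = card (deg_part2 V d))"
  have "\<exists>!N. ?lex_for_V N"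
  proof (rule ex_ex1I)
    show "\<exists>N. ?lex_for_V N" by (rule lex_ideal2_exists[OF assms])
  next
    fix N1 N2 assume "?lex_for_V N1" "?lex_for_V N2"
    then show "N1 = N2"
      using lex_ideal2_mem_iff[of N1] lex_ideal2_mem_iff[of N2] by (auto simp: set_eq_iff)
  qed
  then have "?lex_for_V (lex_of V)"
    unfolding lex_of_def by (rule theI')
  then show ?thesis using lex_ideal2_mem_iff[of "lex_of V" p q] by simp
qed

lemma mem_lex_of_if_segment:
  assumes "monomial_ideal2 V" "\<And>j. j \<le> q \<Longrightarrow> (p + j, q - j) \<in> V"
  shows "(p, q) \<in> lex_of V"
  using mem_lex_of_iff[OF assms(1)] card_deg_part2_ge_segment[OF assms(2)] by blast

lemma monomial_ideal2_fiber:
  assumes "monomial_ideal n I" "f \<in> monoms n" "i < n" "k < n"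
  shows "monomial_ideal2 (fiber I i k f)"
  unfolding monomial_ideal2_def fiber_def
proof (intro allI impI)
  fix p q p' q' assume h: "(p, q) \<in> {(p, q). f(i := p, k := q) \<in> I} \<and> p \<le> p' \<and> q \<le> q'"
  have "f(i := p', k := q') \<in> monoms n" using assms(2-4) unfolding monoms_def by auto
  moreover have "f(i := p, k := q) \<le> f(i := p', k := q')" using h by (auto simp: le_fun_def)
  ultimately show "(p', q') \<in> {(p, q). f(i := p, k := q) \<in> I}"
    using h assms(1) unfolding monomial_ideal_def by auto
qed

lemma mem_compression_if_segment:
  assumes "monomial_ideal n I" "m \<in> monoms n" "i < k" "k < n"
    and "\<And>j. j \<le> m k \<Longrightarrow> m(i := m i + j, k := m k - j) \<in> I"
  shows "m \<in> compression n i k I"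
proof -
  let ?f = "m(i := 0, k := 0)"
  have "?f \<in> monoms n" using assms(2) unfolding monoms_def by auto
  then have "monomial_ideal2 (fiber I i k ?f)"
    using monomial_ideal2_fiber assms(1,3,4) by simp
  moreover have "?f(i := m i + j, k := m k - j) = m(i := m i + j, k := m k - j)" for j
    using assms(3) by (auto simp: fun_eq_iff)
  ultimately have "(m i, m k) \<in> lex_of (fiber I i k ?f)"
    using assms(5) by (intro mem_lex_of_if_segment) (auto simp: fiber_def)
  then show ?thesis unfolding compression_def using assms(2) by simp
qed

lemma strongly_stable_shift:
  assumes "strongly_stable n J" "m \<in> J" "i < k" "k < n" "j \<le> m k"
  shows "m(i := m i + j, k := m k - j) \<in> J"
  using assms(5)
proof (induction j)
  case (Suc j)
  let ?u = "m(i := m i + j, k := m k - Suc j)"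
  have "m \<in> monoms n"
    using assms(1,2) unfolding strongly_stable_def monomial_ideal_def by blast
  then have "?u \<in> monoms n"
    using assms(3,4) unfolding monoms_def by auto
  moreover have "?u(k := ?u k + 1) = m(i := m i + j, k := m k - j)"
    using Suc.prems by (auto simp: fun_eq_iff)
  moreover have "m(i := m i + j, k := m k - j) \<in> J"
    by (rule Suc.IH) (use Suc.prems in simp)
  ultimately have "?u(i := ?u i + 1) \<in> J"
    using assms(1,3,4) unfolding strongly_stable_def by metis
  moreover have "?u(i := ?u i + 1) = m(i := m i + Suc j, k := m k - Suc j)"
    using assms(3) by (auto simp: fun_eq_iff)
  ultimately show ?case by metis
qed (use assms(2) in simp)

lemma min_gens_below:
  assumes "I \<subseteq> monoms n" "u \<in> I"
  shows "\<exists>g\<in>min_gens I. g \<le> u"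
  using assms(2)
proof (induction "\<Sum>t<n. u t" arbitrary: u rule: less_induct)
  case less
  show ?case
  proof (cases "u \<in> min_gens I")
    case False
    then obtain m' where m': "m' \<in> I" "m' \<le> u" "m' \<noteq> u"
      using less.prems unfolding min_gens_def by auto
    then obtain t where "m' t \<noteq> u t" by (meson ext)
    with m'(2) have t: "m' t < u t" by (simp add: le_fun_def order_less_le)
    have "t < n"
    proof (rule ccontr)
      assume "\<not> t < n"
      then have "u t = 0" using less.prems assms(1) unfolding monoms_def by auto
      with t show False by simp
    qed
    then have "(\<Sum>t<n. m' t) < (\<Sum>t<n. u t)"
      using m'(2) t by (intro sum_strict_mono_ex1) (auto simp: le_fun_def)
    then obtain g where "g \<in> min_gens I" "g \<le> m'" using less.hyps m'(1) by blast
    then show ?thesis using m'(2) by (auto intro: order_trans)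
  qed auto
qed

lemma mem_gen_ideal_min_gens_Diff:
  assumes "I \<subseteq> monoms n" "u \<in> I" "\<not> g \<le> u"
  shows "u \<in> gen_ideal n (min_gens I - {g})"
  using min_gens_below[OF assms(1,2)] assms unfolding gen_ideal_def by blast

lemma monomial_ideal_gen_ideal: "monomial_ideal n (gen_ideal n G)"
  unfolding monomial_ideal_def gen_ideal_def by (auto intro: order_trans)

lemma var_pow_le_iff: "var_pow j c \<le> m \<longleftrightarrow> c \<le> m j"
  by (auto simp: le_fun_def var_pow_def)

lemma var_pow_mem_P_ideal:
  assumes "j < r" "m \<in> monoms n" "e j \<le> m j"
  shows "m \<in> P_ideal n r e"
  using assms unfolding P_ideal_def gen_ideal_def var_pow_le_iff[symmetric] by blast

theorem mainTheorem4:
  fixes n r i k :: nat and e :: "nat \<Rightarrow> nat" and I J :: "(nat \<Rightarrow> nat) set"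
  assumes "r \<le> n"
    and "\<forall>j<r. 2 \<le> e j"
    and "\<forall>j1 j2. j1 \<le> j2 \<and> j2 < r \<longrightarrow> e j1 \<le> e j2"
    and "strongly_stable n J"
    and "monomial_ideal n I"
    and "P_ideal n r e \<union> J \<subseteq> I"
    and "i < k" and "k < n"
  shows "J \<subseteq> compression n i k
           (if k < r then gen_ideal n (min_gens I - {var_pow k (e k)}) else I)
         \<union> P_ideal n r e"
proof
  fix m assume "m \<in> J"
  define I' where "I' = (if k < r then gen_ideal n (min_gens I - {var_pow k (e k)}) else I)"
  have I_monoms: "I \<subseteq> monoms n" using assms(5) unfolding monomial_ideal_def by blast
  have m_monoms: "m \<in> monoms n" using \<open>m \<in> J\<close> assms(6) I_monoms by blast
  have "m \<in> compression n i k I'" if "m \<notin> P_ideal n r e"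
  proof (rule mem_compression_if_segment)
    show "monomial_ideal n I'"
      unfolding I'_def using assms(5) monomial_ideal_gen_ideal by simp
    fix j assume "j \<le> m k"
    let ?u = "m(i := m i + j, k := m k - j)"
    have "?u \<in> I"
      using strongly_stable_shift[OF assms(4) \<open>m \<in> J\<close> assms(7,8) \<open>j \<le> m k\<close>] assms(6) by blast
    moreover have "\<not> var_pow k (e k) \<le> ?u" if "k < r"
      using var_pow_mem_P_ideal[OF that m_monoms] \<open>m \<notin> P_ideal n r e\<close>
      by (auto simp: var_pow_le_iff)
    ultimately show "?u \<in> I'"
      unfolding I'_def using mem_gen_ideal_min_gens_Diff[OF I_monoms] by simp
  qed (use m_monoms assms(7,8) in auto)
  then show "m \<in> compression n i k I' \<union> P_ideal n r e" by blast
qed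

end
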